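(* Let $p\in(0,1/2]$ be a fixed constant. There exist positive constants $C, c$ depending only on $p$ such that the following holds. Let $d\le n$ be positive integers with $d=pn$, let $m$ be an integer with $n/2\le m\le n$, and let $v\in\mathbb{S}^{n-1}$ be a fixed vector. Let $M$ be a random $m\times n$ matrix whose rows are independent random vectors, each uniformly distributed on the set of vectors in $\{0,1\}^n$ with exactly $d$ ones. Then \[ \mathbb{P}\left(\|Mv\|_2\le c\sqrt{pn}\right)\le e^{-Cn}. \]
   Context: $\mathbb{S}^{n-1}=\{x\in\mathbb{R}^n:\|x\|_2=1\}$ is the Euclidean unit sphere and $\|\cdot\|_2$ the Euclidean norm. *)

theory Defs
  imports "HOL-Probability.Probability"
begin

text \<open>Vectors in {0,1}^n with exactly d ones, as functions on indices 0..n-1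
  (extended by 0 outside the range, so that the set is finite).\<close>
definition zero_one_rows :: "nat \<Rightarrow> nat \<Rightarrow> (nat \<Rightarrow> real) set" where
  "zero_one_rows n d = {x. (\<forall>j. x j = 0 \<or> x j = 1) \<and> (\<forall>j\<ge>n. x j = 0)
      \<and> card {j. j < n \<and> x j = 1} = d}"

text \<open>The uniform distribution on this set is exactly the law of a matrix with
  independent rows, each uniform on zero_one_rows n d.\<close>
definition row_matrices :: "nat \<Rightarrow> nat \<Rightarrow> nat \<Rightarrow> (nat \<Rightarrow> nat \<Rightarrow> real) set" where
  "row_matrices m n d = {M. (\<forall>i<m. M i \<in> zero_one_rows n d) \<and> (\<forall>i\<ge>m. M i = (\<lambda>_. 0))}"

definition matvec_norm :: "nat \<Rightarrow> nat \<Rightarrow> (nat \<Rightarrow> nat \<Rightarrow> real) \<Rightarrow> (nat \<Rightarrow> real) \<Rightarrow> real" where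
  "matvec_norm m n M v = sqrt (\<Sum>i<m. (\<Sum>j<n. M i j * v j)\<^sup>2)"

end

theory Submission
  imports Defs
begin

text \<open>
  It suffices to show that a single uniformly random row x satisfies
  \<open>\<langle>x, v\<rangle>\<^sup>2 \<ge> p\<^sup>2/320\<close> with probability at least p/24: then
  \<open>E exp(-\<langle>x, v\<rangle>\<^sup>2/\<tau>) \<le> exp(-p/48)\<close> for \<open>\<tau> = p\<^sup>2/320\<close>, and the exponential Markov
  inequality over the m \<ge> n/2 independent rows gives the bound \<open>exp(-Cn)\<close>.

  For a single row, pair the coordinates below the median of v with those above it. If v is
  close to a constant vector \<open>t\<cdot>1\<close>, then \<open>\<langle>x, v\<rangle>\<close> is close to \<open>d t\<close> and a second moment
  bound shows \<open>|\<langle>x, v\<rangle>| \<ge> |d t|/2\<close> for at least half of the rows. Otherwise the pairs carry a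
  fixed amount of the mass of v. Exchanging the entries of x inside a random set T of pairs
  preserves the uniform distribution of x and turns \<open>\<langle>x, v\<rangle>\<close> into a shifted Rademacher sum,
  whose second and fourth moments are explicit; the Paley-Zygmund inequality then makes
  \<open>\<langle>x, v\<rangle>\<^sup>2\<close> large for a fixed fraction of the sets T.
\<close>

lemma markov_inequality_card:
  fixes f :: "'a \<Rightarrow> real" and \<theta> :: real
  assumes "finite A" and "\<And>x. x \<in> A \<Longrightarrow> 0 \<le> f x"
  shows "\<theta> * card {x\<in>A. \<theta> \<le> f x} \<le> (\<Sum>x\<in>A. f x)"
proof -
  have "\<theta> * card {x\<in>A. \<theta> \<le> f x} = (\<Sum>x\<in>{x\<in>A. \<theta> \<le> f x}. \<theta>)"
    by simp
  also have "\<dots> \<le> (\<Sum>x\<in>{x\<in>A. \<theta> \<le> f x}. f x)"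
    by (rule sum_mono) simp
  also have "\<dots> \<le> (\<Sum>x\<in>A. f x)"
    by (rule sum_mono2) (use assms in auto)
  finally show ?thesis .
qed

lemma sum_le_sum_upper_tail:
  fixes f :: "'a \<Rightarrow> real" and \<theta> :: real
  assumes "finite A" and "0 \<le> \<theta>"
  shows "(\<Sum>x\<in>A. f x) \<le> (\<Sum>x\<in>{x\<in>A. \<theta> \<le> f x}. f x) + \<theta> * card A"
proof -
  define G where "G = {x\<in>A. \<theta> \<le> f x}"
  have "(\<Sum>x\<in>A. f x) = (\<Sum>x\<in>G. f x) + (\<Sum>x\<in>A - G. f x)"
    using sum.subset_diff[of G A f] assms(1) by (auto simp: G_def)
  also have "(\<Sum>x\<in>A - G. f x) \<le> (\<Sum>x\<in>A - G. \<theta>)"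
    by (rule sum_mono) (auto simp: G_def)
  also have "\<dots> = \<theta> * card (A - G)"
    by simp
  also have "\<dots> \<le> \<theta> * card A"
    using assms by (intro mult_left_mono) (auto intro: card_mono)
  finally show ?thesis by (simp add: G_def)
qed

lemma reverse_markov_card:
  fixes f :: "'a \<Rightarrow> real" and B \<theta> :: real
  assumes "finite A" and "\<And>x. x \<in> A \<Longrightarrow> f x \<le> B" and "0 \<le> \<theta>"
  shows "(\<Sum>x\<in>A. f x) - \<theta> * card A \<le> B * card {x\<in>A. \<theta> \<le> f x}"
proof -
  have "(\<Sum>x\<in>{x\<in>A. \<theta> \<le> f x}. f x) \<le> B * card {x\<in>A. \<theta> \<le> f x}"
    using sum_mono[of "{x\<in>A. \<theta> \<le> f x}" f "\<lambda>_. B"] assms(2) by (auto simp: mult.commute)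
  then show ?thesis
    using sum_le_sum_upper_tail[OF assms(1,3), of f] by linarith
qed

lemma paley_zygmund_card:
  fixes f :: "'a \<Rightarrow> real" and \<theta> :: real
  assumes "finite A" and "\<And>x. x \<in> A \<Longrightarrow> 0 \<le> f x" and "0 \<le> \<theta>" and "\<theta> \<le> 1"
  shows "((1 - \<theta>) * (\<Sum>x\<in>A. f x))\<^sup>2
    \<le> card {x\<in>A. \<theta> * (\<Sum>x\<in>A. f x) / card A \<le> f x} * (\<Sum>x\<in>A. (f x)\<^sup>2)"
proof -
  define S where "S = (\<Sum>x\<in>A. f x)"
  define G where "G = {x\<in>A. \<theta> * S / card A \<le> f x}"
  have S: "0 \<le> S"
    unfolding S_def using assms(2) by (rule sum_nonneg)
  have "S \<le> (\<Sum>x\<in>G. f x) + \<theta> * S / card A * card A"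
    unfolding S_def G_def
    using assms S_def S by (intro sum_le_sum_upper_tail) auto
  also have "\<theta> * S / card A * card A \<le> \<theta> * S"
    using assms(3) S by simp
  finally have "(1 - \<theta>) * S \<le> (\<Sum>x\<in>G. 1 * f x)"
    by (simp add: algebra_simps)
  moreover have "0 \<le> (1 - \<theta>) * S"
    using assms(4) S by simp
  ultimately have "((1 - \<theta>) * S)\<^sup>2 \<le> (\<Sum>x\<in>G. 1 * f x)\<^sup>2"
    by (rule power_mono)
  also have "\<dots> \<le> (\<Sum>x\<in>G. 1\<^sup>2) * (\<Sum>x\<in>G. (f x)\<^sup>2)"
    by (rule Cauchy_Schwarz_ineq_sum)
  also have "\<dots> = card G * (\<Sum>x\<in>G. (f x)\<^sup>2)"
    by simp
  also have "\<dots> \<le> card G * (\<Sum>x\<in>A. (f x)\<^sup>2)"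
    using assms(1) by (intro mult_left_mono sum_mono2) (auto simp: G_def)
  finally show ?thesis
    unfolding S_def G_def .
qed

lemma sum_Pow_insert:
  assumes "finite K" and "k \<notin> K"
  shows "(\<Sum>T\<in>Pow (insert k K). g T) = (\<Sum>T\<in>Pow K. g T) + (\<Sum>T\<in>Pow K. g (insert k T))"
proof -
  have "(\<Sum>T\<in>Pow (insert k K). g T) = (\<Sum>T\<in>Pow K. g T) + (\<Sum>T\<in>insert k ` Pow K. g T)"
    unfolding Pow_insert by (rule sum.union_disjoint) (use assms in auto)
  also have "(\<Sum>T\<in>insert k ` Pow K. g T) = (\<Sum>T\<in>Pow K. g (insert k T))"
    by (rule sum.reindex_cong[where l="insert k"]) (use assms in \<open>auto simp: inj_on_def\<close>)
  finally show ?thesis .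
qed

text \<open>
  Since \<open>c + (\<Sum>k\<in>T. u k) = c + (\<Sum>k\<in>K. u k)/2 + (\<Sum>k\<in>K. \<epsilon>\<^sub>k u k/2)\<close> with \<open>\<epsilon>\<^sub>k = \<plusminus>1\<close>
  according to \<open>k \<in> T\<close>, averaging over all \<open>T \<subseteq> K\<close> is averaging over independent random signs;
  the closed forms below are the second and fourth moments of this Rademacher sum.
\<close>

lemma sum_Pow_shifted_sum_power2:
  fixes u :: "'a \<Rightarrow> real" and c :: real
  assumes "finite K"
  shows "(\<Sum>T\<in>Pow K. (c + (\<Sum>k\<in>T. u k))\<^sup>2) =
    2 ^ card K * ((c + (\<Sum>k\<in>K. u k) / 2)\<^sup>2 + (\<Sum>k\<in>K. (u k / 2)\<^sup>2))"
  using assms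
proof (induction K arbitrary: c rule: finite_induct)
  case empty
  then show ?case by simp
next
  case (insert k K)
  have shift: "(\<Sum>T\<in>Pow K. (c + (\<Sum>j\<in>insert k T. u j))\<^sup>2) = (\<Sum>T\<in>Pow K. ((c + u k) + (\<Sum>j\<in>T. u j))\<^sup>2)"
    by (rule sum.cong) (use insert in \<open>auto simp: finite_subset sum.insert_if add.assoc\<close>)
  have "\<And>P c u s q::real. P * ((c + s/2)\<^sup>2 + q) + P * ((c + u + s/2)\<^sup>2 + q)
      = 2 * P * ((c + (u+s)/2)\<^sup>2 + ((u/2)\<^sup>2 + q))"
    by (simp add: field_simps power2_eq_square)
  then show ?case
    unfolding sum_Pow_insert[OF insert(1,2)] shift insert(3)
    using insert(1,2) by (simp add: card_insert_if)
qed

lemma sum_Pow_shifted_sum_power4: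
  fixes u :: "'a \<Rightarrow> real" and c :: real
  assumes "finite K"
  shows "(\<Sum>T\<in>Pow K. (c + (\<Sum>k\<in>T. u k))^4) =
    2 ^ card K * ((c + (\<Sum>k\<in>K. u k) / 2)^4
      + 6 * (c + (\<Sum>k\<in>K. u k) / 2)\<^sup>2 * (\<Sum>k\<in>K. (u k / 2)\<^sup>2)
      + 3 * (\<Sum>k\<in>K. (u k / 2)\<^sup>2)\<^sup>2 - 2 * (\<Sum>k\<in>K. (u k / 2)^4))"
  using assms
proof (induction K arbitrary: c rule: finite_induct)
  case empty
  then show ?case by simp
next
  case (insert k K)
  have shift: "(\<Sum>T\<in>Pow K. (c + (\<Sum>j\<in>insert k T. u j))^4) = (\<Sum>T\<in>Pow K. ((c + u k) + (\<Sum>j\<in>T. u j))^4)"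
    by (rule sum.cong) (use insert in \<open>auto simp: finite_subset sum.insert_if add.assoc\<close>)
  have "\<And>P c u s q r::real. P * ((c + s/2)^4 + 6 * (c + s/2)\<^sup>2 * q + 3 * q\<^sup>2 - 2 * r)
      + P * ((c + u + s/2)^4 + 6 * (c + u + s/2)\<^sup>2 * q + 3 * q\<^sup>2 - 2 * r)
      = 2 * P * ((c + (u+s)/2)^4 + 6 * (c + (u+s)/2)\<^sup>2 * ((u/2)\<^sup>2 + q)
        + 3 * ((u/2)\<^sup>2 + q)\<^sup>2 - 2 * ((u/2)^4 + r))"
    by (simp add: field_simps power2_eq_square power4_eq_xxxx)
  then show ?case
    unfolding sum_Pow_insert[OF insert(1,2)] shift insert(3)
    using insert(1,2) by (simp add: card_insert_if)
qed

lemma sum_Pow_shifted_sum_power4_le: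
  fixes u :: "'a \<Rightarrow> real" and c :: real
  assumes "finite K"
  shows "(\<Sum>T\<in>Pow K. ((c + (\<Sum>k\<in>T. u k))\<^sup>2)\<^sup>2) \<le>
    3 * 2 ^ card K * ((c + (\<Sum>k\<in>K. u k) / 2)\<^sup>2 + (\<Sum>k\<in>K. (u k / 2)\<^sup>2))\<^sup>2"
proof -
  define y where "y = c + (\<Sum>k\<in>K. u k) / 2"
  define S where "S = (\<Sum>k\<in>K. (u k / 2)\<^sup>2)"
  define Q where "Q = (\<Sum>k\<in>K. (u k / 2)^4)"
  have "0 \<le> Q"
    unfolding Q_def by (intro sum_nonneg) auto
  moreover have "0 \<le> y^4"
    by simp
  moreover have "3 * (y\<^sup>2 + S)\<^sup>2 - (y^4 + 6 * y\<^sup>2 * S + 3 * S\<^sup>2 - 2 * Q) = 2 * y^4 + 2 * Q"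
    by (simp add: power2_eq_square power4_eq_xxxx algebra_simps)
  ultimately have "y^4 + 6 * y\<^sup>2 * S + 3 * S\<^sup>2 - 2 * Q \<le> 3 * (y\<^sup>2 + S)\<^sup>2"
    by linarith
  then show ?thesis
    using sum_Pow_shifted_sum_power4[OF assms, of c u]
    by (simp add: y_def S_def Q_def flip: power_mult)
qed

lemma card_Pow_le_card_large_shifted_sum:
  fixes u :: "'a \<Rightarrow> real" and c :: real
  assumes "finite K"
  defines "E \<equiv> (c + (\<Sum>k\<in>K. u k) / 2)\<^sup>2 + (\<Sum>k\<in>K. (u k / 2)\<^sup>2)"
  shows "card (Pow K) \<le> 12 * card {T\<in>Pow K. E / 2 \<le> (c + (\<Sum>k\<in>T. u k))\<^sup>2}"
proof (cases "E = 0")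
  case True
  then show ?thesis by (simp add: Pow_def)
next
  case False
  define N :: real where "N = card (Pow K)"
  define G where "G = {T\<in>Pow K. E / 2 \<le> (c + (\<Sum>k\<in>T. u k))\<^sup>2}"
  have N: "N = 2 ^ card K" "0 < N"
    using assms(1) by (auto simp: N_def card_Pow)
  have "0 \<le> E"
    unfolding E_def by (intro add_nonneg_nonneg sum_nonneg) auto
  with False have E: "0 < E" by simp
  have sum2: "(\<Sum>T\<in>Pow K. (c + (\<Sum>k\<in>T. u k))\<^sup>2) = N * E"
    using sum_Pow_shifted_sum_power2[OF assms(1)] by (simp add: N E_def)
  have "((1 - 1/2) * (N * E))\<^sup>2 \<le> card G * (\<Sum>T\<in>Pow K. ((c + (\<Sum>k\<in>T. u k))\<^sup>2)\<^sup>2)"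
    using paley_zygmund_card[of "Pow K" "\<lambda>T. (c + (\<Sum>k\<in>T. u k))\<^sup>2" "1/2"] assms(1) N
    unfolding sum2 G_def N_def by simp
  also have "\<dots> \<le> card G * (3 * N * E\<^sup>2)"
    using sum_Pow_shifted_sum_power4_le[OF assms(1), of c u]
    by (intro mult_left_mono) (simp_all add: N E_def)
  finally have "N * (N * E\<^sup>2) \<le> N * (12 * card G * E\<^sup>2)"
    by (simp add: power2_eq_square algebra_simps)
  then have "N * E\<^sup>2 \<le> 12 * card G * E\<^sup>2"
    using N by simp
  then show ?thesis
    using E by (simp add: N_def G_def)
qed

lemma zero_one_rows_values: "x \<in> zero_one_rows n d \<Longrightarrow> x j = 0 \<or> x j = 1"
  by (auto simp: zero_one_rows_def)

lemma zero_one_rows_power2: "x \<in> zero_one_rows n d \<Longrightarrow> (x j)\<^sup>2 = x j"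
  using zero_one_rows_values[of x n d j] by auto

lemma sum_zero_one_rows:
  assumes "x \<in> zero_one_rows n d"
  shows "(\<Sum>j<n. x j) = d"
proof -
  have "(\<Sum>j<n. x j) = (\<Sum>j<n. of_bool (x j = 1))"
    by (rule sum.cong) (use zero_one_rows_values[OF assms] in auto)
  also have "\<dots> = card {j. j < n \<and> x j = 1}"
    by (simp add: Int_def conj_commute)
  finally show ?thesis
    using assms by (simp add: zero_one_rows_def)
qed

lemma finite_zero_one_rows: "finite (zero_one_rows n d)"
proof (rule finite_subset)
  show "zero_one_rows n d \<subseteq> PiE_dflt {..<n} 0 (\<lambda>_. {0, 1})"
    by (auto simp: zero_one_rows_def PiE_dflt_def)
  show "finite (PiE_dflt {..<n} (0::real) (\<lambda>_. {0, 1}))"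
    by (intro finite_PiE_dflt) auto
qed

lemma zero_one_rows_nonempty:
  assumes "d \<le> n"
  shows "zero_one_rows n d \<noteq> {}"
proof -
  have "{j. j < n \<and> (if j < d then 1 else 0::real) = 1} = {..<d}"
    using assms by auto
  then have "(\<lambda>j. if j < d then 1 else 0 :: real) \<in> zero_one_rows n d"
    using assms by (auto simp: zero_one_rows_def)
  then show ?thesis by auto
qed

lemma zero_one_rows_permute:
  assumes \<sigma>: "\<sigma> permutes {..<n}" and x: "x \<in> zero_one_rows n d"
  shows "x \<circ> \<sigma> \<in> zero_one_rows n d"
proof -
  have "\<sigma> ` {j. j < n \<and> x (\<sigma> j) = 1} = {j. j < n \<and> x j = 1}"
    using permutes_in_image[OF \<sigma>] permutes_inverses[OF \<sigma>]
    by (auto simp: image_iff) (metis lessThan_iff)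
  then have "card {j. j < n \<and> x (\<sigma> j) = 1} = card {j. j < n \<and> x j = 1}"
    by (metis card_image permutes_inj_on[OF \<sigma>])
  moreover have "\<sigma> j = j" if "n \<le> j" for j
    using permutes_not_in[OF \<sigma>] that by simp
  ultimately show ?thesis
    using x by (auto simp: zero_one_rows_def)
qed

lemma sum_zero_one_rows_permute:
  assumes "\<sigma> permutes {..<n}"
  shows "(\<Sum>x\<in>zero_one_rows n d. g (x \<circ> \<sigma>)) = (\<Sum>x\<in>zero_one_rows n d. g x)"
  by (rule sum.reindex_bij_witness[where i="\<lambda>x. x \<circ> inv \<sigma>" and j="\<lambda>x. x \<circ> \<sigma>"])
    (auto simp: comp_assoc permutes_inv_o[OF assms] permutes_inv[OF assms]
      intro: zero_one_rows_permute[OF assms] zero_one_rows_permute[OF permutes_inv[OF assms]])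

lemma card_permuted_zero_one_rows_double_count:
  assumes "finite I" and "\<And>i. i \<in> I \<Longrightarrow> \<sigma> i permutes {..<n}"
  shows "card I * card {x\<in>zero_one_rows n d. P x}
    = (\<Sum>x\<in>zero_one_rows n d. card {i\<in>I. P (x \<circ> \<sigma> i)})"
proof -
  let ?Z = "zero_one_rows n d"
  have "card I * card {x\<in>?Z. P x} = (\<Sum>i\<in>I. \<Sum>x\<in>?Z. of_bool (P x))"
    using finite_zero_one_rows by (simp add: Int_def conj_commute)
  also have "\<dots> = (\<Sum>i\<in>I. \<Sum>x\<in>?Z. of_bool (P (x \<circ> \<sigma> i)))"
    by (intro sum.cong refl sum_zero_one_rows_permute[OF assms(2), where g="\<lambda>x. of_bool (P x)", symmetric])
  also have "\<dots> = (\<Sum>x\<in>?Z. card {i\<in>I. P (x \<circ> \<sigma> i)})"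
    using assms(1) by (subst sum.swap) (simp add: Int_def conj_commute)
  finally show ?thesis .
qed

lemma sum_zero_one_rows_coord:
  assumes "j < n"
  shows "(\<Sum>x\<in>zero_one_rows n d. x j) * n = real d * card (zero_one_rows n d)"
proof -
  let ?Z = "zero_one_rows n d"
  have same: "(\<Sum>x\<in>?Z. x i) = (\<Sum>x\<in>?Z. x j)" if "i < n" for i
    using sum_zero_one_rows_permute[OF permutes_swap_id[of i "{..<n}" j], of "\<lambda>x. x i" d]
      that assms by simp
  have "(\<Sum>x\<in>?Z. x j) * n = (\<Sum>i<n. \<Sum>x\<in>?Z. x i)"
    using same by simp
  also have "\<dots> = (\<Sum>x\<in>?Z. \<Sum>i<n. x i)"
    by (rule sum.swap)
  also have "\<dots> = real d * card ?Z"
    by (simp add: sum_zero_one_rows)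
  finally show ?thesis .
qed

lemma sum_zero_one_rows_coord_mult_compl:
  assumes "a < n" and "b < n" and "a \<noteq> b"
  shows "(\<Sum>x\<in>zero_one_rows n d. x a * (1 - x b)) * (real n * (real n - 1))
    = real d * (real n - real d) * card (zero_one_rows n d)"
proof -
  let ?Z = "zero_one_rows n d" and ?J = "{..<n} - {a}"
  have same: "(\<Sum>x\<in>?Z. x a * (1 - x i)) = (\<Sum>x\<in>?Z. x a * (1 - x b))" if "i \<in> ?J" for i
    using sum_zero_one_rows_permute[OF permutes_swap_id[of i "{..<n}" b], of "\<lambda>x. x a * (1 - x i)" d]
      that assms by (simp add: transpose_def)
  have row: "(\<Sum>i\<in>?J. x a * (1 - x i)) = x a * (real n - real d)" if x: "x \<in> ?Z" for x
  proof -
    have "(\<Sum>i\<in>?J. x i) = d - x a"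
      using assms(1) sum_zero_one_rows[OF x] by (simp add: sum_diff1)
    moreover have "real (card ?J) = n - 1"
      using assms(1) by (simp add: of_nat_diff)
    ultimately have "(\<Sum>i\<in>?J. 1 - x i) = (real n - 1) - (d - x a)"
      using assms(1) by (simp add: sum_subtractf of_nat_diff)
    then have "(\<Sum>i\<in>?J. x a * (1 - x i)) = x a * ((real n - 1) - (d - x a))"
      by (simp add: sum_distrib_left[symmetric])
    then show ?thesis
      using zero_one_rows_values[OF x, of a] by auto
  qed
  have "(\<Sum>x\<in>?Z. x a * (1 - x b)) * (real n - 1) = (\<Sum>i\<in>?J. \<Sum>x\<in>?Z. x a * (1 - x i))"
    using same assms(1) by (simp add: of_nat_diff)
  also have "\<dots> = (\<Sum>x\<in>?Z. x a) * (real n - real d)"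
    by (subst sum.swap) (simp add: row sum_distrib_right)
  finally have "(\<Sum>x\<in>?Z. x a * (1 - x b)) * (real n - 1) * real n
      = ((\<Sum>x\<in>?Z. x a) * real n) * (real n - real d)"
    by (simp only: mult_ac)
  then show ?thesis
    unfolding sum_zero_one_rows_coord[OF assms(1)] by (simp only: mult_ac)
qed

lemma sum_zero_one_rows_coord_diff_power2:
  assumes "a < n" and "b < n" and "a \<noteq> b"
  shows "(\<Sum>x\<in>zero_one_rows n d. (x a - x b)\<^sup>2) * (real n * (real n - 1))
    = 2 * real d * (real n - real d) * card (zero_one_rows n d)"
proof -
  let ?Z = "zero_one_rows n d" and ?N = "real n * (real n - 1)"
  have "(\<Sum>x\<in>?Z. (x a - x b)\<^sup>2) = (\<Sum>x\<in>?Z. x a * (1 - x b)) + (\<Sum>x\<in>?Z. x b * (1 - x a))"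
    unfolding sum.distrib[symmetric]
    by (rule sum.cong) (auto simp: power2_eq_square algebra_simps zero_one_rows_power2[simplified power2_eq_square])
  then have "(\<Sum>x\<in>?Z. (x a - x b)\<^sup>2) * ?N
      = (\<Sum>x\<in>?Z. x a * (1 - x b)) * ?N + (\<Sum>x\<in>?Z. x b * (1 - x a)) * ?N"
    by (simp only: distrib_right)
  then show ?thesis
    unfolding sum_zero_one_rows_coord_mult_compl[OF assms] sum_zero_one_rows_coord_mult_compl[OF assms(2,1) assms(3)[symmetric]]
    by simp
qed

definition row_inner :: "nat \<Rightarrow> (nat \<Rightarrow> real) \<Rightarrow> (nat \<Rightarrow> real) \<Rightarrow> real" where
  "row_inner n v x = (\<Sum>j<n. x j * v j)"

lemma matvec_norm_row_inner: "matvec_norm m n M v = sqrt (\<Sum>i<m. (row_inner n v (M i))\<^sup>2)"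
  unfolding matvec_norm_def row_inner_def ..

lemma row_inner_power2_le:
  assumes x: "x \<in> zero_one_rows n d"
  shows "(row_inner n w x)\<^sup>2 \<le> d * (\<Sum>j<n. x j * (w j)\<^sup>2)"
proof -
  have "row_inner n w x = (\<Sum>j<n. x j * (x j * w j))"
    unfolding row_inner_def
    by (intro sum.cong refl) (metis mult.assoc power2_eq_square zero_one_rows_power2[OF x])
  then have "(row_inner n w x)\<^sup>2 \<le> (\<Sum>j<n. (x j)\<^sup>2) * (\<Sum>j<n. (x j * w j)\<^sup>2)"
    by (simp only: Cauchy_Schwarz_ineq_sum)
  also have "\<dots> = d * (\<Sum>j<n. x j * (w j)\<^sup>2)"
    using zero_one_rows_power2[OF x] sum_zero_one_rows[OF x] by (simp add: power_mult_distrib)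
  finally show ?thesis .
qed

lemma sum_row_inner_power2_le:
  "(\<Sum>x\<in>zero_one_rows n d. (row_inner n w x)\<^sup>2) * n
    \<le> (real d)\<^sup>2 * card (zero_one_rows n d) * (\<Sum>j<n. (w j)\<^sup>2)"
proof -
  let ?Z = "zero_one_rows n d"
  define C where "C j = (\<Sum>x\<in>?Z. x j)" for j
  have "(\<Sum>x\<in>?Z. (row_inner n w x)\<^sup>2) \<le> (\<Sum>x\<in>?Z. d * (\<Sum>j<n. x j * (w j)\<^sup>2))"
    by (rule sum_mono) (rule row_inner_power2_le)
  also have "\<dots> = d * (\<Sum>j<n. (w j)\<^sup>2 * C j)"
    unfolding C_def by (simp add: sum_distrib_left sum_distrib_right sum.swap[of _ ?Z] mult_ac)
  finally have "(\<Sum>x\<in>?Z. (row_inner n w x)\<^sup>2) * n \<le> d * (\<Sum>j<n. (w j)\<^sup>2 * C j) * n"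
    by (simp add: mult_right_mono)
  also have "\<dots> = d * (\<Sum>j<n. (w j)\<^sup>2 * (C j * n))"
    by (simp add: sum_distrib_left sum_distrib_right mult_ac)
  also have "\<dots> = d * (\<Sum>j<n. (w j)\<^sup>2 * (d * card ?Z))"
    unfolding C_def by (simp add: sum_zero_one_rows_coord)
  also have "\<dots> = (real d)\<^sup>2 * card ?Z * (\<Sum>j<n. (w j)\<^sup>2)"
    by (simp add: sum_distrib_left sum_distrib_right power2_eq_square mult_ac)
  finally show ?thesis .
qed

lemma card_large_row_inner_le:
  "\<theta> * card {x\<in>zero_one_rows n d. \<theta> \<le> (row_inner n w x)\<^sup>2} * n
    \<le> (real d)\<^sup>2 * card (zero_one_rows n d) * (\<Sum>j<n. (w j)\<^sup>2)"
proof -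
  have "\<theta> * card {x\<in>zero_one_rows n d. \<theta> \<le> (row_inner n w x)\<^sup>2}
      \<le> (\<Sum>x\<in>zero_one_rows n d. (row_inner n w x)\<^sup>2)"
    by (rule markov_inequality_card[OF finite_zero_one_rows]) simp
  then show ?thesis
    using sum_row_inner_power2_le[where n=n and d=d and w=w]
    by (meson mult_right_mono of_nat_0_le_iff order_trans)
qed

lemma row_inner_shift:
  assumes "x \<in> zero_one_rows n d"
  shows "row_inner n (\<lambda>j. v j - t) x = row_inner n v x - d * t"
  using sum_zero_one_rows[OF assms]
  by (simp add: row_inner_def right_diff_distrib sum_subtractf sum_distrib_left[symmetric] mult_ac)

lemma unit_near_constant_level:
  fixes v :: "nat \<Rightarrow> real" and t :: real
  assumes unit: "(\<Sum>j<n. (v j)\<^sup>2) = 1" and near: "(\<Sum>j<n. (v j - t)\<^sup>2) < 1/20"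
  shows "2/5 < n * t\<^sup>2"
proof -
  have "1 \<le> (\<Sum>j<n. 2 * (v j - t)\<^sup>2 + 2 * t\<^sup>2)"
    unfolding unit[symmetric]
  proof (rule sum_mono)
    fix j
    have "0 \<le> (v j - 2 * t)\<^sup>2" by simp
    then show "(v j)\<^sup>2 \<le> 2 * (v j - t)\<^sup>2 + 2 * t\<^sup>2"
      by (simp add: power2_eq_square algebra_simps)
  qed
  with near show ?thesis
    by (simp add: sum.distrib sum_distrib_left[symmetric])
qed

lemma power2_half_le_power2_add:
  fixes c w :: real
  assumes "w\<^sup>2 < (c / 2)\<^sup>2"
  shows "(c / 2)\<^sup>2 \<le> (c + w)\<^sup>2"
proof -
  have "\<bar>w\<bar> < \<bar>c / 2\<bar>"
    using assms abs_le_square_iff[of "c / 2" w] by linarith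
  then have "\<bar>c / 2\<bar> \<le> \<bar>c + w\<bar>"
    by arith
  then show ?thesis
    by (simp only: abs_le_square_iff)
qed

lemma row_inner_large_of_shift_small:
  fixes v :: "nat \<Rightarrow> real" and t :: real
  assumes x: "x \<in> zero_one_rows n d" and t: "2/5 < n * t\<^sup>2"
    and small: "(row_inner n (\<lambda>j. v j - t) x)\<^sup>2 < (d * t / 2)\<^sup>2"
  shows "(real d)\<^sup>2 / (10 * real n) \<le> (row_inner n v x)\<^sup>2"
proof -
  have n: "0 < real n"
    using t by (cases "n = 0") auto
  have "(d * t / 2)\<^sup>2 \<le> (d * t + row_inner n (\<lambda>j. v j - t) x)\<^sup>2"
    using small by (rule power2_half_le_power2_add)
  then have shifted: "(d * t / 2)\<^sup>2 \<le> (row_inner n v x)\<^sup>2"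
    by (simp add: row_inner_shift[OF x])
  have "(real d)\<^sup>2 * 2 \<le> (real d)\<^sup>2 * (5 * (n * t\<^sup>2))"
    using t by (intro mult_left_mono) auto
  then have "(real d)\<^sup>2 \<le> (d * t / 2)\<^sup>2 * (10 * real n)"
    by (simp add: power_mult_distrib power_divide mult_ac)
  also have "\<dots> \<le> (row_inner n v x)\<^sup>2 * (10 * real n)"
    using shifted n by (intro mult_right_mono) auto
  finally show ?thesis
    using n by (simp add: pos_divide_le_eq)
qed

lemma row_anticoncentration_near_constant:
  fixes v :: "nat \<Rightarrow> real" and t :: real
  assumes unit: "(\<Sum>j<n. (v j)\<^sup>2) = 1" and near: "(\<Sum>j<n. (v j - t)\<^sup>2) < 1/20"
  shows "card (zero_one_rows n d)
    \<le> 2 * card {x\<in>zero_one_rows n d. (real d)\<^sup>2 / (10 * real n) \<le> (row_inner n v x)\<^sup>2}"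
proof (cases "d = 0")
  case True
  then show ?thesis by simp
next
  case False
  let ?Z = "zero_one_rows n d" and ?w = "\<lambda>j. v j - t"
  define Bad where "Bad = {x\<in>?Z. (d * t / 2)\<^sup>2 \<le> (row_inner n ?w x)\<^sup>2}"
  have t: "2/5 < n * t\<^sup>2"
    by (rule unit_near_constant_level[OF unit near])
  have "(real d)\<^sup>2 * (card Bad * (n * t\<^sup>2) / 4) = (d * t / 2)\<^sup>2 * card Bad * n"
    by (simp add: power_mult_distrib power_divide mult_ac)
  also have "\<dots> \<le> (real d)\<^sup>2 * card ?Z * (\<Sum>j<n. (?w j)\<^sup>2)"
    unfolding Bad_def by (rule card_large_row_inner_le)
  also have "\<dots> \<le> (real d)\<^sup>2 * card ?Z * (1/20)"
    using near by (intro mult_left_mono) auto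
  finally have "card Bad * (n * t\<^sup>2) \<le> card ?Z / 5"
    using False by (simp add: mult_ac)
  moreover have "card Bad * (2/5) \<le> card Bad * (n * t\<^sup>2)"
    using t by (intro mult_left_mono) auto
  ultimately have "2 * card Bad \<le> card ?Z"
    by simp
  moreover have "card (?Z - Bad) \<le> card {x\<in>?Z. (real d)\<^sup>2 / (10 * real n) \<le> (row_inner n v x)\<^sup>2}"
    using row_inner_large_of_shift_small[OF _ t]
    by (intro card_mono) (auto simp: Bad_def not_le finite_zero_one_rows)
  moreover have "card ?Z - card Bad \<le> card (?Z - Bad)"
    by (rule diff_card_le_card_Diff) (simp add: Bad_def finite_zero_one_rows)
  ultimately show ?thesis
    by linarith
qed

locale index_pairing =
  fixes a b :: "nat \<Rightarrow> nat" and L n :: nat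
  assumes inj_a: "inj_on a {..<L}" and inj_b: "inj_on b {..<L}"
    and disjoint: "a ` {..<L} \<inter> b ` {..<L} = {}"
    and a_less: "k < L \<Longrightarrow> a k < n" and b_less: "k < L \<Longrightarrow> b k < n"
begin

definition swap_pairs :: "nat set \<Rightarrow> nat \<Rightarrow> nat" where
  "swap_pairs T j =
    (if j \<in> a ` T then b (inv_into T a j) else if j \<in> b ` T then a (inv_into T b j) else j)"

definition swap_gain :: "(nat \<Rightarrow> real) \<Rightarrow> (nat \<Rightarrow> real) \<Rightarrow> nat \<Rightarrow> real" where
  "swap_gain v x k = (x (a k) - x (b k)) * (v (b k) - v (a k))"

lemma swap_pairs_a: "T \<subseteq> {..<L} \<Longrightarrow> k \<in> T \<Longrightarrow> swap_pairs T (a k) = b k"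
  using inj_on_subset[OF inj_a] by (auto simp: swap_pairs_def)

lemma swap_pairs_b:
  assumes "T \<subseteq> {..<L}" and "k \<in> T"
  shows "swap_pairs T (b k) = a k"
proof -
  have "b k \<notin> a ` T"
    using disjoint assms by auto
  then show ?thesis
    using inj_on_subset[OF inj_b] assms by (auto simp: swap_pairs_def)
qed

lemma swap_pairs_other: "j \<notin> a ` T \<Longrightarrow> j \<notin> b ` T \<Longrightarrow> swap_pairs T j = j"
  by (simp add: swap_pairs_def)

lemma swap_pairs_involution:
  assumes "T \<subseteq> {..<L}"
  shows "swap_pairs T (swap_pairs T j) = j"
  using swap_pairs_a[OF assms] swap_pairs_b[OF assms] swap_pairs_other[of j T]
  by (cases "j \<in> a ` T \<or> j \<in> b ` T") auto

lemma swap_pairs_permutes: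
  assumes T: "T \<subseteq> {..<L}"
  shows "swap_pairs T permutes {..<n}"
  unfolding permutes_def
proof (intro conjI allI impI)
  fix j assume "j \<notin> {..<n}"
  then have "j \<notin> a ` T" "j \<notin> b ` T"
    using T a_less b_less by force+
  then show "swap_pairs T j = j"
    by (rule swap_pairs_other)
next
  fix j
  show "\<exists>!i. swap_pairs T i = j"
    by (metis swap_pairs_involution[OF T])
qed

lemma row_inner_swap_pairs:
  assumes T: "T \<subseteq> {..<L}"
  shows "row_inner n v (x \<circ> swap_pairs T) = row_inner n v x + (\<Sum>k\<in>T. swap_gain v x k)"
proof -
  let ?s = "swap_pairs T"
  have fin: "finite T"
    using T finite_subset by blast
  have "row_inner n v (x \<circ> ?s) - row_inner n v x = (\<Sum>j<n. (x (?s j) - x j) * v j)"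
    unfolding row_inner_def by (simp add: sum_subtractf left_diff_distrib)
  also have "\<dots> = (\<Sum>j\<in>a ` T \<union> b ` T. (x (?s j) - x j) * v j)"
    by (rule sum.mono_neutral_right) (use T a_less b_less swap_pairs_other in auto)
  also have "\<dots> = (\<Sum>j\<in>a ` T. (x (?s j) - x j) * v j) + (\<Sum>j\<in>b ` T. (x (?s j) - x j) * v j)"
    by (rule sum.union_disjoint) (use fin disjoint T in auto)
  also have "(\<Sum>j\<in>a ` T. (x (?s j) - x j) * v j) = (\<Sum>k\<in>T. (x (b k) - x (a k)) * v (a k))"
    using inj_on_subset[OF inj_a T] by (simp add: sum.reindex swap_pairs_a[OF T])
  also have "(\<Sum>j\<in>b ` T. (x (?s j) - x j) * v j) = (\<Sum>k\<in>T. (x (a k) - x (b k)) * v (b k))"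
    using inj_on_subset[OF inj_b T] by (simp add: sum.reindex swap_pairs_b[OF T])
  finally show ?thesis
    by (simp add: swap_gain_def o_def sum.distrib[symmetric] algebra_simps)
qed

lemma sum_swap_gain_power2_ge:
  assumes "0 < d" and "2 * d \<le> n"
  shows "real d * card (zero_one_rows n d) * (\<Sum>k<L. (v (a k) - v (b k))\<^sup>2)
    \<le> (\<Sum>x\<in>zero_one_rows n d. \<Sum>k<L. (swap_gain v x k)\<^sup>2) * n"
proof -
  let ?Z = "zero_one_rows n d" and ?N = "real n * (real n - 1)"
  define c where "c = real (card ?Z)"
  have n: "2 \<le> real n"
    using assms by linarith
  have pair: "(\<Sum>x\<in>?Z. (x (a k) - x (b k))\<^sup>2) * ?N = 2 * real d * (real n - real d) * c" if "k < L" for k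
    unfolding c_def
    by (rule sum_zero_one_rows_coord_diff_power2) (use that a_less b_less disjoint in auto)
  have "(\<Sum>x\<in>?Z. \<Sum>k<L. (swap_gain v x k)\<^sup>2) * ?N
      = (\<Sum>k<L. (v (a k) - v (b k))\<^sup>2 * ((\<Sum>x\<in>?Z. (x (a k) - x (b k))\<^sup>2) * ?N))"
    by (subst sum.swap)
      (simp add: swap_gain_def power_mult_distrib power2_commute[of "v (b _)"] sum_distrib_left
        sum_distrib_right mult_ac)
  also have "\<dots> = (\<Sum>k<L. (v (a k) - v (b k))\<^sup>2 * (2 * real d * (real n - real d) * c))"
    by (intro sum.cong refl) (simp add: pair)
  also have "\<dots> \<ge> (\<Sum>k<L. (v (a k) - v (b k))\<^sup>2 * (real d * (real n - 1) * c))"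
  proof (intro sum_mono mult_left_mono)
    have "2 * real d \<le> real n"
      using assms(2) by (metis of_nat_le_iff of_nat_mult of_nat_numeral)
    then have "real n - 1 \<le> 2 * (real n - real d)"
      by (simp add: algebra_simps)
    then have "real d * (real n - 1) \<le> real d * (2 * (real n - real d))"
      by (rule mult_left_mono) simp
    then show "real d * (real n - 1) * c \<le> 2 * real d * (real n - real d) * c"
      by (intro mult_right_mono) (simp_all add: c_def mult_ac)
  qed simp
  finally have "(real n - 1) * (real d * c * (\<Sum>k<L. (v (a k) - v (b k))\<^sup>2))
      \<le> (real n - 1) * ((\<Sum>x\<in>?Z. \<Sum>k<L. (swap_gain v x k)\<^sup>2) * n)"
    by (simp add: sum_distrib_left sum_distrib_right mult_ac)
  then show ?thesis
    using n by (simp add: c_def)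
qed

lemma sum_swap_gain_power2_le:
  assumes "x \<in> zero_one_rows n d"
  shows "(\<Sum>k<L. (swap_gain v x k)\<^sup>2) \<le> (\<Sum>k<L. (v (a k) - v (b k))\<^sup>2)"
proof (rule sum_mono)
  fix k
  have "(x (a k) - x (b k))\<^sup>2 \<le> 1"
    using zero_one_rows_values[OF assms, of "a k"] zero_one_rows_values[OF assms, of "b k"] by auto
  then show "(swap_gain v x k)\<^sup>2 \<le> (v (a k) - v (b k))\<^sup>2"
    unfolding swap_gain_def power_mult_distrib power2_commute[of "v (b k)"]
    by (simp add: mult_left_le_one_le)
qed

lemma card_large_swap_gain:
  assumes "0 < d" and "2 * d \<le> n"
  shows "real d / n * card (zero_one_rows n d) \<le> 2 * card {x\<in>zero_one_rows n d.
    real d / n * (\<Sum>k<L. (v (a k) - v (b k))\<^sup>2) / 2 \<le> (\<Sum>k<L. (swap_gain v x k)\<^sup>2)}"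
proof -
  let ?Z = "zero_one_rows n d"
  define D where "D = (\<Sum>k<L. (v (a k) - v (b k))\<^sup>2)"
  define W where "W x = (\<Sum>k<L. (swap_gain v x k)\<^sup>2)" for x
  define p where "p = real d / n"
  define G where "G = {x\<in>?Z. p * D / 2 \<le> W x}"
  have n: "0 < real n" and p: "0 \<le> p" "p \<le> 1"
    using assms by (auto simp: p_def)
  have "0 \<le> D"
    unfolding D_def by (intro sum_nonneg) simp
  have W_le: "W x \<le> D" if "x \<in> ?Z" for x
    unfolding W_def D_def using that by (rule sum_swap_gain_power2_le)
  have "p * card ?Z * D \<le> (\<Sum>x\<in>?Z. W x)"
    using sum_swap_gain_power2_ge[OF assms, of v] n by (simp add: p_def W_def D_def field_simps)
  moreover have "(\<Sum>x\<in>?Z. W x) - p * D / 2 * card ?Z \<le> D * card G"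
    unfolding G_def using W_le \<open>0 \<le> D\<close> p by (intro reverse_markov_card finite_zero_one_rows) auto
  ultimately have "D * (p * card ?Z) \<le> D * (2 * card G)"
    by (simp add: algebra_simps)
  then have "p * card ?Z \<le> 2 * card G"
  proof (cases "D = 0")
    case True
    then have "G = ?Z"
      by (auto simp: G_def W_def intro: sum_nonneg)
    have "p * card ?Z \<le> card ?Z"
      using p by (intro mult_left_le_one_le) auto
    with \<open>G = ?Z\<close> show ?thesis
      by simp
  next
    case False
    with \<open>0 \<le> D\<close> show ?thesis
      using \<open>D * (p * card ?Z) \<le> D * (2 * card G)\<close> by simp
  qed
  then show ?thesis
    unfolding p_def G_def W_def D_def .
qed

lemma card_Pow_le_card_good_swaps:
  assumes "\<tau> \<le> (\<Sum>k<L. (swap_gain v x k)\<^sup>2) / 8"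
  shows "card (Pow {..<L})
    \<le> 12 * card {T\<in>Pow {..<L}. \<tau> \<le> (row_inner n v (x \<circ> swap_pairs T))\<^sup>2}"
proof -
  define c where "c = row_inner n v x"
  define E where "E = (c + (\<Sum>k<L. swap_gain v x k) / 2)\<^sup>2 + (\<Sum>k<L. (swap_gain v x k / 2)\<^sup>2)"
  have "(\<Sum>k<L. (swap_gain v x k)\<^sup>2) / 4 \<le> E"
    unfolding E_def by (simp add: power_divide sum_divide_distrib)
  then have "\<tau> \<le> E / 2"
    using assms by linarith
  then have "{T\<in>Pow {..<L}. E / 2 \<le> (c + (\<Sum>k\<in>T. swap_gain v x k))\<^sup>2}
      \<subseteq> {T\<in>Pow {..<L}. \<tau> \<le> (row_inner n v (x \<circ> swap_pairs T))\<^sup>2}"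
    by (auto simp: c_def row_inner_swap_pairs)
  then have "card {T\<in>Pow {..<L}. E / 2 \<le> (c + (\<Sum>k\<in>T. swap_gain v x k))\<^sup>2}
      \<le> card {T\<in>Pow {..<L}. \<tau> \<le> (row_inner n v (x \<circ> swap_pairs T))\<^sup>2}"
    by (intro card_mono) auto
  then show ?thesis
    using card_Pow_le_card_large_shifted_sum[of "{..<L}" c "swap_gain v x"] by (simp add: E_def)
qed

lemma row_anticoncentration_spread:
  assumes "0 < d" and "2 * d \<le> n" and spread: "1/20 \<le> (\<Sum>k<L. (v (a k) - v (b k))\<^sup>2)"
  shows "real d / n * card (zero_one_rows n d)
    \<le> 24 * card {x\<in>zero_one_rows n d. (real d / n)\<^sup>2 / 320 \<le> (row_inner n v x)\<^sup>2}"
proof -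
  let ?Z = "zero_one_rows n d" and ?K = "Pow {..<L}"
  define p where "p = real d / n"
  define Good where "Good = {x\<in>?Z. p\<^sup>2 / 320 \<le> (row_inner n v x)\<^sup>2}"
  define G where "G = {x\<in>?Z. p * (\<Sum>k<L. (v (a k) - v (b k))\<^sup>2) / 2 \<le> (\<Sum>k<L. (swap_gain v x k)\<^sup>2)}"
  define good_swaps where
    "good_swaps x = card {T\<in>?K. p\<^sup>2 / 320 \<le> (row_inner n v (x \<circ> swap_pairs T))\<^sup>2}" for x
  have p: "0 \<le> p" "p \<le> 1"
    using assms by (auto simp: p_def)
  have many_swaps: "card ?K \<le> 12 * good_swaps x" if "x \<in> G" for x
    unfolding good_swaps_def
  proof (rule card_Pow_le_card_good_swaps)
    have "p\<^sup>2 / 320 \<le> p / 320"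
      using p by (simp add: power2_eq_square mult_left_le_one_le)
    also have "\<dots> \<le> p * (\<Sum>k<L. (v (a k) - v (b k))\<^sup>2) / 16"
      using mult_left_mono[OF spread p(1)] by simp
    also have "\<dots> \<le> (\<Sum>k<L. (swap_gain v x k)\<^sup>2) / 8"
      using that by (simp add: G_def)
    finally show "p\<^sup>2 / 320 \<le> (\<Sum>k<L. (swap_gain v x k)\<^sup>2) / 8" .
  qed
  have "card ?K * card G = (\<Sum>x\<in>G. card ?K)"
    by simp
  also have "\<dots> \<le> (\<Sum>x\<in>G. 12 * good_swaps x)"
    by (rule sum_mono) (rule many_swaps)
  also have "\<dots> \<le> 12 * (\<Sum>x\<in>?Z. good_swaps x)"
    unfolding sum_distrib_left[symmetric]
    by (intro mult_left_mono sum_mono2) (auto simp: G_def finite_zero_one_rows)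
  also have "(\<Sum>x\<in>?Z. good_swaps x) = card ?K * card Good"
    unfolding Good_def good_swaps_def
    by (rule card_permuted_zero_one_rows_double_count[symmetric]) (auto intro: swap_pairs_permutes)
  finally have "card G \<le> 12 * card Good"
    by (simp add: card_Pow)
  moreover have "p * card ?Z \<le> 2 * card G"
    using card_large_swap_gain[OF assms(1,2), of v] by (simp add: p_def G_def)
  ultimately show ?thesis
    unfolding p_def Good_def by linarith
qed

end

lemma sum_lessThan_fold:
  fixes f :: "nat \<Rightarrow> 'a::comm_monoid_add"
  assumes "L \<le> h"
  shows "(\<Sum>i<h + L. f i) = (\<Sum>k<L. f k + f (k + h)) + (\<Sum>i=L..<h. f i)"
proof -
  have "(\<Sum>i<h + L. f i) = (\<Sum>i<h. f i) + (\<Sum>i=h..<h + L. f i)"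
    by (simp add: lessThan_atLeast0 sum.atLeastLessThan_concat)
  also have "(\<Sum>i<h. f i) = (\<Sum>i<L. f i) + (\<Sum>i=L..<h. f i)"
    using assms by (simp add: lessThan_atLeast0 sum.atLeastLessThan_concat)
  also have "(\<Sum>i=h..<h + L. f i) = (\<Sum>k<L. f (k + h))"
    using sum.shift_bounds_nat_ivl[of f 0 h L] by (simp add: lessThan_atLeast0 add.commute)
  finally show ?thesis
    by (simp add: sum.distrib ac_simps)
qed

lemma sorting_bij_betw:
  fixes v :: "nat \<Rightarrow> 'a::linorder"
  obtains s where "bij_betw s {..<n} {..<n}" and "\<And>i j. i \<le> j \<Longrightarrow> j < n \<Longrightarrow> v (s i) \<le> v (s j)"
proof
  let ?xs = "sort_key v [0..<n]"
  show "bij_betw (\<lambda>i. ?xs ! i) {..<n} {..<n}"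
    by (rule bij_betw_nth) auto
  show "v (?xs ! i) \<le> v (?xs ! j)" if "i \<le> j" "j < n" for i j
    using sorted_nth_mono[of "map v ?xs" i j] that by simp
qed

lemma index_pairing_shift:
  assumes bij: "bij_betw s {..<h + L} {..<h + L}" and "L \<le> h"
  shows "index_pairing s (\<lambda>k. s (k + h)) L (h + L)"
proof
  have inj: "inj_on s {..<h + L}"
    using bij by (rule bij_betw_imp_inj_on)
  show "inj_on s {..<L}"
    by (rule inj_on_subset[OF inj]) (use assms(2) in auto)
  show "inj_on (\<lambda>k. s (k + h)) {..<L}"
  proof (rule inj_onI)
    fix k k' assume k: "k \<in> {..<L}" "k' \<in> {..<L}" and eq: "s (k + h) = s (k' + h)"
    have "k + h = k' + h"
      by (rule inj_onD[OF inj eq]) (use k in auto)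
    then show "k = k'"
      by simp
  qed
  have "s k \<noteq> s (k' + h)" if "k < L" "k' < L" for k k'
  proof
    assume eq: "s k = s (k' + h)"
    have "k = k' + h"
      by (rule inj_onD[OF inj eq]) (use that assms(2) in auto)
    then show False
      using that assms(2) by simp
  qed
  then show "s ` {..<L} \<inter> (\<lambda>k. s (k + h)) ` {..<L} = {}"
    by blast
  show "s k < h + L" "s (k + h) < h + L" if "k < L" for k
    using bij_betw_apply[OF bij] that assms(2) by auto
qed

lemma median_pairing:
  fixes v :: "nat \<Rightarrow> real"
  obtains a b L med where "index_pairing a b L n"
    and "(\<Sum>j<n. (v j - med)\<^sup>2) \<le> (\<Sum>k<L. (v (a k) - v (b k))\<^sup>2)"
proof -
  obtain s where bij: "bij_betw s {..<n} {..<n}"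
    and mono: "\<And>i j. i \<le> j \<Longrightarrow> j < n \<Longrightarrow> v (s i) \<le> v (s j)"
    using sorting_bij_betw[where n=n and v=v] by blast
  define L where "L = n div 2"
  define h where "h = n - L"
  have hL: "L \<le> h" "h + L = n" "h \<le> L + 1"
    by (auto simp: h_def L_def)
  define med where "med = v (s (h - 1))"
  define f where "f i = (v (s i) - med)\<^sup>2" for i
  have "(\<Sum>j<n. (v j - med)\<^sup>2) = (\<Sum>i<h + L. f i)"
    using sum.reindex_bij_betw[OF bij, of "\<lambda>j. (v j - med)\<^sup>2"] hL by (simp add: f_def)
  also have "\<dots> = (\<Sum>k<L. f k + f (k + h)) + (\<Sum>i=L..<h. f i)"
    by (rule sum_lessThan_fold) (rule hL)
  also have "(\<Sum>i=L..<h. f i) = 0"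
  proof (rule sum.neutral, rule ballI)
    fix i assume "i \<in> {L..<h}"
    then have "i = h - 1"
      using hL by auto
    then show "f i = 0"
      by (simp add: f_def med_def)
  qed
  also have "(\<Sum>k<L. f k + f (k + h)) \<le> (\<Sum>k<L. (v (s k) - v (s (k + h)))\<^sup>2)"
  proof (rule sum_mono)
    fix k assume "k \<in> {..<L}"
    then have "v (s k) \<le> med" "med \<le> v (s (k + h))"
      unfolding med_def using hL by (auto intro: mono)
    then have "0 \<le> (med - v (s k)) * (v (s (k + h)) - med)"
      by simp
    then show "f k + f (k + h) \<le> (v (s k) - v (s (k + h)))\<^sup>2"
      by (simp add: f_def power2_eq_square algebra_simps)
  qed
  finally have "(\<Sum>j<n. (v j - med)\<^sup>2) \<le> (\<Sum>k<L. (v (s k) - v (s (k + h)))\<^sup>2)"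
    by simp
  moreover have "index_pairing s (\<lambda>k. s (k + h)) L n"
    using index_pairing_shift[of s h L] bij hL by simp
  ultimately show ?thesis
    using that by blast
qed

lemma row_anticoncentration:
  fixes v :: "nat \<Rightarrow> real"
  assumes "0 < d" and "2 * d \<le> n" and unit: "(\<Sum>j<n. (v j)\<^sup>2) = 1"
  shows "real d / n * card (zero_one_rows n d)
    \<le> 24 * card {x\<in>zero_one_rows n d. (real d / n)\<^sup>2 / 320 \<le> (row_inner n v x)\<^sup>2}"
proof -
  let ?Z = "zero_one_rows n d"
  obtain a b L med where pairing: "index_pairing a b L n"
    and dominated: "(\<Sum>j<n. (v j - med)\<^sup>2) \<le> (\<Sum>k<L. (v (a k) - v (b k))\<^sup>2)"
    by (rule median_pairing)
  show ?thesis
  proof (cases "(\<Sum>j<n. (v j - med)\<^sup>2) < 1/20")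
    case True
    have n: "1 \<le> real n" and p: "real d / n \<le> 1"
      using assms(1,2) by auto
    have "real d / n * card ?Z \<le> 2 * card {x\<in>?Z. (real d)\<^sup>2 / (10 * real n) \<le> (row_inner n v x)\<^sup>2}"
      using mult_right_mono[OF p, of "card ?Z"] row_anticoncentration_near_constant[OF unit True, of d]
      by linarith
    also have "\<dots> \<le> 2 * card {x\<in>?Z. (real d / n)\<^sup>2 / 320 \<le> (row_inner n v x)\<^sup>2}"
    proof -
      have "(real d / n)\<^sup>2 / 320 = (real d)\<^sup>2 / (10 * real n) * (1 / (32 * real n))"
        by (simp add: power_divide power2_eq_square)
      also have "\<dots> \<le> (real d)\<^sup>2 / (10 * real n) * 1"
        using n by (intro mult_left_mono) auto
      finally show ?thesis
        by (intro mult_left_mono of_nat_mono card_mono) (auto simp: finite_zero_one_rows)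
    qed
    finally show ?thesis
      by linarith
  next
    case False
    then have "1/20 \<le> (\<Sum>k<L. (v (a k) - v (b k))\<^sup>2)"
      using dominated by linarith
    then show ?thesis
      by (rule index_pairing.row_anticoncentration_spread[OF pairing assms(1,2)])
  qed
qed

lemma row_matrices_PiE_dflt:
  "row_matrices m n d = PiE_dflt {..<m} (\<lambda>_. 0) (\<lambda>_. zero_one_rows n d)"
  by (auto simp: row_matrices_def PiE_dflt_def not_less)

lemma finite_row_matrices: "finite (row_matrices m n d)"
  unfolding row_matrices_PiE_dflt by (intro finite_PiE_dflt) (auto simp: finite_zero_one_rows)

lemma card_row_matrices: "card (row_matrices m n d) = card (zero_one_rows n d) ^ m"
  unfolding row_matrices_PiE_dflt by (subst card_PiE_dflt) (auto simp: finite_zero_one_rows)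

lemma sum_prod_row_matrices:
  fixes g :: "(nat \<Rightarrow> real) \<Rightarrow> real"
  shows "(\<Sum>M\<in>row_matrices m n d. \<Prod>i<m. g (M i)) = (\<Sum>x\<in>zero_one_rows n d. g x) ^ m"
proof -
  let ?R = "row_matrices m n d" and ?r = "\<lambda>M. restrict M {..<m}"
  have "inj_on ?r ?R"
  proof (rule inj_onI, rule ext)
    fix M M' i assume "M \<in> ?R" "M' \<in> ?R" "?r M = ?r M'"
    then show "M i = M' i"
      by (cases "i < m") (auto simp: row_matrices_def dest: fun_cong[where x=i])
  qed
  then have "(\<Sum>M\<in>?R. \<Prod>i<m. g (M i)) = (\<Sum>h\<in>?r ` ?R. \<Prod>i<m. g (h i))"
    by (simp add: sum.reindex)
  also have "?r ` ?R = PiE {..<m} (\<lambda>_. zero_one_rows n d)"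
    unfolding row_matrices_PiE_dflt by (rule restrict_PiE_dflt)
  also have "(\<Sum>h\<in>\<dots>. \<Prod>i<m. g (h i)) = (\<Prod>i<m. \<Sum>x\<in>zero_one_rows n d. g x)"
    by (rule prod_sum_PiE[symmetric]) (auto simp: finite_zero_one_rows)
  finally show ?thesis
    by simp
qed

lemma sum_exp_neg_le:
  fixes f :: "'a \<Rightarrow> real" and q \<tau> :: real
  assumes "finite A" and "0 < \<tau>" and nonneg: "\<And>x. x \<in> A \<Longrightarrow> 0 \<le> f x"
    and large: "q * card A \<le> card {x\<in>A. \<tau> \<le> f x}"
  shows "(\<Sum>x\<in>A. exp (- f x / \<tau>)) \<le> card A * exp (- q / 2)"
proof -
  let ?G = "{x\<in>A. \<tau> \<le> f x}"
  have exp_le: "exp (- f x / \<tau>) \<le> 1 - of_bool (x \<in> ?G) / 2" if "x \<in> A" for x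
  proof (cases "x \<in> ?G")
    case True
    then have "exp (- f x / \<tau>) \<le> exp (-1)"
      using assms(2) by (simp add: field_simps)
    also have "\<dots> \<le> 1/2"
      using exp_ge_add_one_self[of 1] by (simp add: exp_minus field_simps)
    finally show ?thesis
      using True by simp
  next
    case False
    have "exp (- f x / \<tau>) \<le> 1"
      using nonneg[OF that] assms(2) by simp
    with False that show ?thesis
      by simp
  qed
  have "(\<Sum>x\<in>A. exp (- f x / \<tau>)) \<le> (\<Sum>x\<in>A. 1 - of_bool (x \<in> ?G) / 2)"
    by (rule sum_mono) (rule exp_le)
  also have "\<dots> = card A - card ?G / 2"
    using assms(1) by (simp add: sum_subtractf sum_divide_distrib[symmetric] Int_def conj_commute)
  also have "\<dots> \<le> card A * (1 - q / 2)"
    using large by (simp add: algebra_simps)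
  also have "\<dots> \<le> card A * exp (- q / 2)"
    using exp_ge_add_one_self[of "- q / 2"] by (intro mult_left_mono) auto
  finally show ?thesis .
qed

lemma card_row_matrices_small_sum_le:
  fixes f :: "(nat \<Rightarrow> real) \<Rightarrow> real" and q s \<tau> :: real
  assumes "0 < \<tau>" and nonneg: "\<And>x. 0 \<le> f x"
    and large: "q * card (zero_one_rows n d) \<le> card {x\<in>zero_one_rows n d. \<tau> \<le> f x}"
  shows "card {M\<in>row_matrices m n d. (\<Sum>i<m. f (M i)) \<le> s}
    \<le> exp (s / \<tau> - q * m / 2) * card (row_matrices m n d)"
proof -
  let ?R = "row_matrices m n d" and ?Z = "zero_one_rows n d"
  define g where "g x = exp (- f x / \<tau>)" for x
  have weight: "1 \<le> exp (s / \<tau>) * (\<Prod>i<m. g (M i))" if "(\<Sum>i<m. f (M i)) \<le> s" for M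
  proof -
    have "(\<Prod>i<m. g (M i)) = exp (- (\<Sum>i<m. f (M i)) / \<tau>)"
      unfolding g_def exp_sum[OF finite_lessThan, symmetric] by (simp add: sum_negf sum_divide_distrib)
    then have "exp (s / \<tau>) * (\<Prod>i<m. g (M i)) = exp ((s - (\<Sum>i<m. f (M i))) / \<tau>)"
      by (simp add: exp_add[symmetric] diff_divide_distrib)
    then show ?thesis
      using that assms(1) by simp
  qed
  have "real (card {M\<in>?R. (\<Sum>i<m. f (M i)) \<le> s}) = (\<Sum>M\<in>{M\<in>?R. (\<Sum>i<m. f (M i)) \<le> s}. 1)"
    by simp
  also have "\<dots> \<le> (\<Sum>M\<in>{M\<in>?R. (\<Sum>i<m. f (M i)) \<le> s}. exp (s / \<tau>) * (\<Prod>i<m. g (M i)))"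
    by (rule sum_mono) (simp add: weight)
  also have "\<dots> \<le> (\<Sum>M\<in>?R. exp (s / \<tau>) * (\<Prod>i<m. g (M i)))"
    by (rule sum_mono2) (auto simp: finite_row_matrices g_def intro!: mult_nonneg_nonneg prod_nonneg)
  also have "\<dots> = exp (s / \<tau>) * (\<Sum>x\<in>?Z. g x) ^ m"
    by (simp add: sum_distrib_left[symmetric] sum_prod_row_matrices)
  also have "\<dots> \<le> exp (s / \<tau>) * (card ?Z * exp (- q / 2)) ^ m"
    unfolding g_def
    using sum_exp_neg_le[OF finite_zero_one_rows assms(1) nonneg large]
    by (intro mult_left_mono power_mono) (auto intro: sum_nonneg)
  also have "\<dots> = exp (s / \<tau>) * exp (- q / 2) ^ m * card ?R"
    by (simp add: card_row_matrices power_mult_distrib)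
  also have "exp (s / \<tau>) * exp (- q / 2) ^ m = exp (s / \<tau> - q * m / 2)"
    unfolding exp_of_nat_mult[symmetric] exp_add[symmetric] by (simp add: algebra_simps)
  finally show ?thesis .
qed

lemma card_small_matvec_norm_le:
  fixes v :: "nat \<Rightarrow> real"
  assumes "0 < d" and "2 * d \<le> n" and m: "real n \<le> 2 * real m" and unit: "(\<Sum>j<n. (v j)\<^sup>2) = 1"
  defines "p \<equiv> real d / n"
  shows "card {M\<in>row_matrices m n d. matvec_norm m n M v \<le> p / 248 * sqrt (p * n)}
    \<le> exp (- p / 192 * n) * card (row_matrices m n d)"
proof -
  let ?R = "row_matrices m n d" and ?s = "(p / 248)\<^sup>2 * (p * n)" and ?\<tau> = "p\<^sup>2 / 320"
  have p: "0 < p"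
    using assms(1,2) by (simp add: p_def)
  have "p / 248 * sqrt (p * n) = sqrt ?s"
    using p by (simp add: real_sqrt_mult)
  then have "{M\<in>?R. matvec_norm m n M v \<le> p / 248 * sqrt (p * n)}
      = {M\<in>?R. (\<Sum>i<m. (row_inner n v (M i))\<^sup>2) \<le> ?s}"
    by (simp add: matvec_norm_row_inner)
  moreover have "card {M\<in>?R. (\<Sum>i<m. (row_inner n v (M i))\<^sup>2) \<le> ?s}
      \<le> exp (?s / ?\<tau> - p / 24 * m / 2) * card ?R"
  proof (rule card_row_matrices_small_sum_le)
    show "p / 24 * card (zero_one_rows n d) \<le> card {x\<in>zero_one_rows n d. ?\<tau> \<le> (row_inner n v x)\<^sup>2}"
    proof -
      have "p * card (zero_one_rows n d) \<le> 24 * card {x\<in>zero_one_rows n d. ?\<tau> \<le> (row_inner n v x)\<^sup>2}"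
        using row_anticoncentration[OF assms(1,2) unit] unfolding p_def by simp
      moreover have "p / 24 * card (zero_one_rows n d) = p * card (zero_one_rows n d) / 24"
        by simp
      ultimately show ?thesis
        by linarith
    qed
  qed (use p in auto)
  moreover have "?s / ?\<tau> - p / 24 * m / 2 \<le> - p / 192 * n"
  proof -
    have "?s / ?\<tau> = 5 * p * n / 961"
      using p by (simp add: power2_eq_square field_simps)
    then show ?thesis
      using m p by (simp add: field_simps)
  qed
  ultimately show ?thesis
    by (smt (verit) exp_le_cancel_iff mult_right_mono of_nat_0_le_iff)
qed

theorem lemma2p3:
  fixes p :: real
  assumes "0 < p" and "p \<le> 1/2"
  shows "\<exists>C c :: real. C > 0 \<and> c > 0 \<and>
    (\<forall>n d m :: nat. \<forall>v :: nat \<Rightarrow> real.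
       0 < d \<longrightarrow> d \<le> n \<longrightarrow> real d = p * real n \<longrightarrow>
       real n / 2 \<le> real m \<longrightarrow> m \<le> n \<longrightarrow>
       (\<Sum>j<n. (v j)\<^sup>2) = 1 \<longrightarrow>
       measure_pmf.prob (pmf_of_set (row_matrices m n d))
         {M. matvec_norm m n M v \<le> c * sqrt (p * real n)} \<le> exp (- C * real n))"
proof (intro exI conjI allI impI)
  show "0 < p / 192" and "0 < p / 248"
    using assms(1) by auto
  fix n d m :: nat and v :: "nat \<Rightarrow> real"
  assume "0 < d" and "d \<le> n" and d: "real d = p * real n" and m: "real n / 2 \<le> real m"
    and "m \<le> n" and unit: "(\<Sum>j<n. (v j)\<^sup>2) = 1"
  let ?R = "row_matrices m n d" and ?E = "{M. matvec_norm m n M v \<le> p / 248 * sqrt (p * real n)}"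
  have "real d \<le> real n / 2"
    using d assms(2) mult_right_mono[OF assms(2), of "real n"] by simp
  then have "2 * d \<le> n" and p: "p = real d / n"
    using d \<open>0 < d\<close> by auto
  have "card ?R > 0"
    using zero_one_rows_nonempty[OF \<open>d \<le> n\<close>] finite_zero_one_rows
    by (simp add: card_row_matrices card_gt_0_iff)
  then have "measure_pmf.prob (pmf_of_set ?R) ?E = card {M\<in>?R. M \<in> ?E} / card ?R"
    by (subst measure_pmf_of_set) (auto simp: finite_row_matrices Int_def)
  also have "\<dots> \<le> exp (- (p / 192) * real n)"
    using card_small_matvec_norm_le[OF \<open>0 < d\<close> \<open>2 * d \<le> n\<close> _ unit] m \<open>card ?R > 0\<close>
    by (simp add: p divide_le_eq)
  finally show "measure_pmf.prob (pmf_of_set ?R) ?E \<le> exp (- (p / 192) * real n)" .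
qed

end
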